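(* Let $p_i<p_j$ be primes and let $m\ge p_j^2$ be an integer, and put $M'=\lceil m(1-3/p_j)\rceil$. (a) If $p_i\ge 3$, then $N_m(\{p_i,p_j\})\ge N_{M'}(\{p_i\})$, i.e. $$\#\{1\le k\le m:\ p_i\nmid k(k+2),\ p_j\nmid k(k+2)\}\ \ge\ M'-\left\lfloor \tfrac{M'}{p_i}\right\rfloor-\left\lfloor \tfrac{M'+2}{p_i}\right\rfloor .$$ (b) If $p_i=2$ (so $p_j\ge 3$), then $N_m(\{2,p_j\})\ge N_{M'}(\{2\})$, i.e. $$\#\{1\le k\le m:\ k \text{ odd},\ p_j\nmid k(k+2)\}\ \ge\ M'-\left\lfloor \tfrac{M'}{2}\right\rfloor .$$
   Context: For a finite set $Q$ of primes and an integer $x\ge 0$, $N_x(Q)=\#\{k\in\{1,\dots,x\}:\ p\nmid k(k+2)\text{ for every }p\in Q\}$. (For $p=2$ the condition $2\nmid k(k+2)$ just says $k$ is odd; for odd $p$ one has $N_x(\{p\})=x-\lfloor x/p\rfloor-\lfloor (x+2)/p\rfloor$.) $\lfloor\cdot\rfloor,\lceil\cdot\rceil$ are floor and ceiling. *)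

theory Defs
  imports Complex_Main "HOL-Computational_Algebra.Primes"
begin

definition Ncount :: "nat \<Rightarrow> nat set \<Rightarrow> nat" where
  "Ncount x Q = card {k \<in> {1..x}. \<forall>p\<in>Q. \<not> p dvd k * (k + 2)}"

end

theory Submission
  imports Defs "HOL-Number_Theory.Cong"
begin

text \<open>
  Write P k for p not dividing k(k+2). Passing from N_m({p}) to N_m({p,q}) loses the k with P k
  on the progressions q t + q (t < m div q) and q t + q - 2 (t < (m+2) div q), while N_m({p})
  exceeds N_M({p}) by the k with P k in the window (M, m]. P is periodic mod p with c good and
  d <= 2 bad residues, and q is invertible mod p, so n consecutive terms of either progression
  (or of the window) contain between c(n - d)/p and c(n + d)/p values with P. The loss is thus
  outweighed by the gain as soon as m div q + (m+2) div q + 3d <= m - M. For M = M' this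
  follows from m - M' >= 3m div q >= 2 (m div q) + (m+2) div q once m div q >= 3d; as
  m div q >= q, that fails only for p = 3, q = 5 and 25 <= m < 30, which is checked by
  computation.
\<close>

lemma Ncount_mono: "x \<le> y \<Longrightarrow> Ncount x Q \<le> Ncount y Q"
  unfolding Ncount_def by (rule card_mono) auto

lemma Ncount_Suc:
  "Ncount (Suc x) Q = Ncount x Q + (if \<forall>p\<in>Q. \<not> p dvd Suc x * (Suc x + 2) then 1 else 0)"
proof -
  have "{k \<in> {1..Suc x}. \<forall>p\<in>Q. \<not> p dvd k * (k + 2)} =
     (if \<forall>p\<in>Q. \<not> p dvd Suc x * (Suc x + 2) then insert (Suc x) else id)
        {k \<in> {1..x}. \<forall>p\<in>Q. \<not> p dvd k * (k + 2)}"
    by (auto simp: le_Suc_eq)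
  then show ?thesis unfolding Ncount_def by auto
qed

lemma Ncount_add_tail:
  assumes "M \<le> m"
  shows "Ncount m Q = Ncount M Q + card {k \<in> {Suc M..m}. \<forall>p\<in>Q. \<not> p dvd k * (k + 2)}"
proof -
  have "{k \<in> {1..m}. \<forall>p\<in>Q. \<not> p dvd k * (k + 2)} =
        {k \<in> {1..M}. \<forall>p\<in>Q. \<not> p dvd k * (k + 2)} \<union>
        {k \<in> {Suc M..m}. \<forall>p\<in>Q. \<not> p dvd k * (k + 2)}"
    using assms by auto
  then show ?thesis unfolding Ncount_def by (simp add: card_Un_disjoint disjoint_iff)
qed

lemma Ncount_insert:
  "Ncount m (insert q Q) + card {k \<in> {1..m}. (\<forall>p\<in>Q. \<not> p dvd k * (k + 2)) \<and> q dvd k * (k + 2)}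
     = Ncount m Q"
proof -
  have "{k \<in> {1..m}. \<forall>p\<in>Q. \<not> p dvd k * (k + 2)} =
        {k \<in> {1..m}. \<forall>p\<in>insert q Q. \<not> p dvd k * (k + 2)} \<union>
        {k \<in> {1..m}. (\<forall>p\<in>Q. \<not> p dvd k * (k + 2)) \<and> q dvd k * (k + 2)}"
    by auto
  then show ?thesis unfolding Ncount_def by (simp add: card_Un_disjoint disjoint_iff)
qed

lemma Ncount_singleton_odd_prime:
  assumes "prime p" "p \<noteq> 2"
  shows "int (Ncount x {p}) = int x - int x div int p - (int x + 2) div int p"
proof -
  have "p > 2" using prime_ge_2_nat[OF assms(1)] assms(2) by linarith
  have "Ncount x {p} + x div p + (x + 2) div p = x"
  proof (induction x)
    case 0
    then show ?case using \<open>p > 2\<close> by (simp add: Ncount_def)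
  next
    case (Suc x)
    have "\<not> (p dvd Suc x \<and> p dvd Suc x + 2)"
    proof
      assume "p dvd Suc x \<and> p dvd Suc x + 2"
      then have "p dvd 2" by (metis dvd_add_right_iff)
      with \<open>p > 2\<close> show False by (meson dvd_imp_le leD zero_less_numeral)
    qed
    moreover have "p dvd Suc x * (Suc x + 2) \<longleftrightarrow> p dvd Suc x \<or> p dvd Suc x + 2"
      using assms(1) by (rule prime_dvd_mult_iff)
    ultimately show ?case
      using Suc.IH div_Suc[of x p] div_Suc[of "x + 2" p]
      by (auto simp: Ncount_Suc dvd_eq_mod_eq_0)
  qed
  moreover have "int (x div p) = int x div int p" "int ((x + 2) div p) = (int x + 2) div int p"
    by (simp_all only: zdiv_int of_nat_add of_nat_numeral)
  ultimately show ?thesis by linarith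
qed

lemma Ncount_singleton_two: "int (Ncount x {2}) = int x - int x div 2"
proof -
  have "Ncount x {2} + x div 2 = x"
  proof (induction x)
    case 0
    then show ?case by (simp add: Ncount_def)
  next
    case (Suc x)
    then show ?case by (cases "even x") (auto simp: Ncount_Suc)
  qed
  moreover have "int (x div 2) = int x div 2"
    by (simp only: zdiv_int of_nat_numeral)
  ultimately show ?thesis by linarith
qed

lemma card_affine_full_window:
  fixes p u v a :: nat and P :: "nat \<Rightarrow> bool"
  assumes "coprime u p" "p > 0" and periodic: "\<And>x. P (x mod p) = P x"
  shows "card {t \<in> {a..<a + p}. P (u * t + v)} = card {r \<in> {..<p}. P r}"
proof -
  define g where "g t = (u * t + v) mod p" for t
  have inj: "inj_on g {a..<a + p}"
  proof (rule linorder_inj_onI')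
    fix s t assume "s \<in> {a..<a + p}" "t \<in> {a..<a + p}" "s < t"
    show "g s \<noteq> g t"
    proof
      assume "g s = g t"
      then have "[u * t + v = u * s + v] (mod p)"
        by (simp add: g_def cong_def)
      then have "[t = s] (mod p)"
        using \<open>coprime u p\<close> by (simp add: cong_add_rcancel_nat cong_mult_lcancel_nat)
      then have "p dvd t - s"
        using \<open>s < t\<close> by (simp add: cong_altdef_nat)
      moreover have "0 < t - s" "t - s < p"
        using \<open>s \<in> _\<close> \<open>t \<in> _\<close> \<open>s < t\<close> by auto
      ultimately show False
        by (meson dvd_imp_le leD)
    qed
  qed
  moreover have "g ` {a..<a + p} \<subseteq> {..<p}"
    using \<open>p > 0\<close> by (auto simp: g_def)
  ultimately have image: "g ` {a..<a + p} = {..<p}"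
    by (intro card_subset_eq) (auto simp: card_image)
  have "card {t \<in> {a..<a + p}. P (u * t + v)} = card {t \<in> {a..<a + p}. P (g t)}"
    using periodic by (simp add: g_def)
  also have "\<dots> = card (g ` {t \<in> {a..<a + p}. P (g t)})"
    by (rule card_image[symmetric], rule inj_on_subset[OF inj]) auto
  also have "g ` {t \<in> {a..<a + p}. P (g t)} = {r \<in> {..<p}. P r}"
    unfolding image[symmetric] by auto
  finally show ?thesis .
qed

lemma card_affine_window_bounds:
  fixes p u v a n :: nat and P :: "nat \<Rightarrow> bool"
  assumes "coprime u p" "p > 0" and periodic: "\<And>x. P (x mod p) = P x"
  defines "c \<equiv> card {r \<in> {..<p}. P r}" and "d \<equiv> card {r \<in> {..<p}. \<not> P r}"
  shows "p * card {t \<in> {a..<a + n}. P (u * t + v)} \<le> c * (n + d)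
         \<and> c * n \<le> p * card {t \<in> {a..<a + n}. P (u * t + v)} + c * d"
proof -
  define X where "X a n = card {t \<in> {a..<a + n}. P (u * t + v)}" for a n
  have "c + d = card ({r \<in> {..<p}. P r} \<union> {r \<in> {..<p}. \<not> P r})"
    unfolding c_def d_def by (rule card_Un_disjoint[symmetric]) auto
  also have "{r \<in> {..<p}. P r} \<union> {r \<in> {..<p}. \<not> P r} = {..<p}"
    by auto
  finally have "c + d = p"
    by simp
  have full: "X a p = c" for a
    unfolding X_def c_def using assms(1,2) periodic by (rule card_affine_full_window)
  have split: "X a (n1 + n2) = X a n1 + X (a + n1) n2" for a n1 n2
  proof -
    have "{t \<in> {a..<a + (n1 + n2)}. P (u * t + v)} =
          {t \<in> {a..<a + n1}. P (u * t + v)} \<union>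
          {t \<in> {a + n1..<a + n1 + n2}. P (u * t + v)}"
      by auto
    then show ?thesis unfolding X_def by (simp add: card_Un_disjoint disjoint_iff)
  qed
  have short_len: "X a n \<le> n" for a n
  proof -
    have "X a n \<le> card {a..<a + n}"
      unfolding X_def by (rule card_mono) auto
    then show ?thesis by simp
  qed
  show ?thesis
  proof (induction n arbitrary: a rule: less_induct)
    case (less n)
    show ?case
    proof (cases "n < p")
      case True
      have "X a p = X a n + X (a + n) (p - n)"
        using split[of a n "p - n"] True by simp
      then have x_le_c: "X a n \<le> c" and n_le: "n \<le> X a n + d"
        using full[of a] short_len[of "a + n" "p - n"] \<open>c + d = p\<close> True by linarith+
      have "p * X a n = c * X a n + d * X a n"
        unfolding \<open>c + d = p\<close>[symmetric] by (rule add_mult_distrib)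
      also have "\<dots> \<le> c * n + c * d"
        using short_len x_le_c by (intro add_mono) (simp_all add: mult.commute[of d])
      finally have upper: "p * X a n \<le> c * (n + d)" by (simp add: algebra_simps)
      have "c * n \<le> c * X a n + c * d"
        using n_le by (metis distrib_left mult_le_mono2)
      also have "\<dots> \<le> p * X a n + c * d"
        using \<open>c + d = p\<close> by simp
      finally show ?thesis using upper unfolding X_def by simp
    next
      case False
      have "X a n = c + X (a + p) (n - p)"
        using split[of a p "n - p"] full[of a] False by simp
      then have "p * X a n = c * p + p * X (a + p) (n - p)"
        by (simp add: algebra_simps)
      moreover have "p * X (a + p) (n - p) \<le> c * (n - p + d)
                     \<and> c * (n - p) \<le> p * X (a + p) (n - p) + c * d"
        using less.IH[of "n - p" "a + p"] False \<open>p > 0\<close> unfolding X_def by simp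
      moreover have "c * (n - p + d) + c * p = c * (n + d)" "c * (n - p) + c * p = c * n"
        using False by (simp_all flip: add_mult_distrib2)
      ultimately show ?thesis
        unfolding X_def[symmetric] by linarith
    qed
  qed
qed

lemma prime_dvd_shifted_product_cover:
  fixes q m :: nat
  assumes "prime q"
  shows "{k \<in> {1..m}. q dvd k * (k + 2)} \<subseteq>
           (\<lambda>t. q * t + q) ` {..<m div q} \<union> (\<lambda>t. q * t + (q - 2)) ` {..<(m + 2) div q}"
proof
  fix k assume "k \<in> {k \<in> {1..m}. q dvd k * (k + 2)}"
  then have k: "1 \<le> k" "k \<le> m" "q dvd k * (k + 2)"
    by auto
  then have "q dvd k \<or> q dvd k + 2"
    using prime_dvd_mult_iff[OF assms] by blast
  have "q \<ge> 2" using assms by (rule prime_ge_2_nat)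
  from \<open>q dvd k \<or> q dvd k + 2\<close>
  show "k \<in> (\<lambda>t. q * t + q) ` {..<m div q} \<union> (\<lambda>t. q * t + (q - 2)) ` {..<(m + 2) div q}"
  proof
    assume "q dvd k"
    then obtain s where s: "k = q * s" ..
    with k have "0 < s" "s * q \<le> m" by (auto simp: mult.commute)
    then have "s - 1 < m div q" and "k = q * (s - 1) + q"
      using less_eq_div_iff_mult_less_eq[of q s m] \<open>q \<ge> 2\<close> s by (auto simp: algebra_simps)
    then show ?thesis by blast
  next
    assume "q dvd k + 2"
    then obtain s where s: "k + 2 = q * s" ..
    with k have "0 < s" "s * q \<le> m + 2"
      by (auto simp: mult.commute intro!: gr0I)
    then have "s - 1 < (m + 2) div q" and "k = q * (s - 1) + (q - 2)"
      using less_eq_div_iff_mult_less_eq[of q s "m + 2"] \<open>q \<ge> 2\<close> s by (auto simp: algebra_simps)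
    then show ?thesis by blast
  qed
qed

lemma card_dvd_shifted_residues_le_two:
  fixes p :: nat
  assumes "prime p"
  shows "card {r \<in> {..<p}. p dvd r * (r + 2)} \<le> 2"
proof -
  have "{r \<in> {..<p}. p dvd r * (r + 2)} \<subseteq> {0, p - 2}"
  proof
    fix r assume "r \<in> {r \<in> {..<p}. p dvd r * (r + 2)}"
    then have "r < p" "p dvd r * (r + 2)"
      by auto
    then have "p dvd r \<or> p dvd r + 2"
      using prime_dvd_mult_iff[OF assms] by blast
    then have "r = 0 \<or> r + 2 = p"
    proof
      assume "p dvd r"
      with \<open>r < p\<close> show ?thesis
        by (meson dvd_imp_le gr0I leD)
    next
      assume "p dvd r + 2"
      then have "p dvd r + 2 - p"
        by (simp add: dvd_diff_nat)
      moreover have "r + 2 - p \<le> 1"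
        using \<open>r < p\<close> by simp
      moreover have "\<not> p dvd 1"
        using prime_gt_1_nat[OF assms] by simp
      ultimately have "r + 2 - p = 0"
        by (metis One_nat_def le_SucE le_zero_eq)
      then show ?thesis
        using dvd_imp_le[OF \<open>p dvd r + 2\<close>] by simp
    qed
    then show "r \<in> {0, p - 2}" by auto
  qed
  then have "card {r \<in> {..<p}. p dvd r * (r + 2)} \<le> card {0, p - 2}"
    by (rule card_mono[rotated]) simp
  also have "\<dots> \<le> 2"
    by (simp add: card_insert_le_m1)
  finally show ?thesis .
qed

lemma dvd_shifted_product_mod_iff:
  fixes p x :: nat
  shows "p dvd x mod p * (x mod p + 2) \<longleftrightarrow> p dvd x * (x + 2)"
proof -
  have "[x mod p * (x mod p + 2) = x * (x + 2)] (mod p)"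
    by (intro cong_mult cong_add) (simp_all add: cong_def)
  then show ?thesis
    by (rule cong_dvd_iff)
qed

lemma card_filter_dvd_shifted_product_le:
  fixes q m :: nat and P :: "nat \<Rightarrow> bool"
  assumes "prime q"
  shows "card {k \<in> {1..m}. P k \<and> q dvd k * (k + 2)}
           \<le> card {t \<in> {..<m div q}. P (q * t + q)}
             + card {t \<in> {..<(m + 2) div q}. P (q * t + (q - 2))}"
proof -
  define A where "A = (\<lambda>t. q * t + q) ` {t \<in> {..<m div q}. P (q * t + q)}"
  define B where "B = (\<lambda>t. q * t + (q - 2)) ` {t \<in> {..<(m + 2) div q}. P (q * t + (q - 2))}"
  have "{k \<in> {1..m}. P k \<and> q dvd k * (k + 2)} \<subseteq> A \<union> B"
  proof
    fix k assume "k \<in> {k \<in> {1..m}. P k \<and> q dvd k * (k + 2)}"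
    then have "P k"
      "k \<in> (\<lambda>t. q * t + q) ` {..<m div q} \<union> (\<lambda>t. q * t + (q - 2)) ` {..<(m + 2) div q}"
      using prime_dvd_shifted_product_cover[OF assms, of m] by auto
    then show "k \<in> A \<union> B"
      unfolding A_def B_def by auto
  qed
  then have "card {k \<in> {1..m}. P k \<and> q dvd k * (k + 2)} \<le> card (A \<union> B)"
    by (rule card_mono[rotated]) (simp add: A_def B_def)
  also have "\<dots> \<le> card A + card B"
    by (rule card_Un_le)
  also have "\<dots> \<le> card {t \<in> {..<m div q}. P (q * t + q)}
                  + card {t \<in> {..<(m + 2) div q}. P (q * t + (q - 2))}"
    unfolding A_def B_def by (intro add_mono card_image_le) simp_all
  finally show ?thesis .
qed

lemma Ncount_singleton_le_Ncount_pair: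
  fixes p q m M :: nat
  assumes "prime p" "prime q" "p \<noteq> q" "M \<le> m"
    and room: "m div q + (m + 2) div q + 3 * card {r \<in> {..<p}. p dvd r * (r + 2)} \<le> m - M"
  shows "Ncount M {p} \<le> Ncount m {p, q}"
proof -
  define P where "P k \<longleftrightarrow> \<not> p dvd k * (k + 2)" for k
  define c where "c = card {r \<in> {..<p}. P r}"
  define d where "d = card {r \<in> {..<p}. \<not> P r}"
  define G where "G = card {k \<in> {Suc M..m}. P k}"
  define R1 where "R1 = card {t \<in> {..<m div q}. P (q * t + q)}"
  define R2 where "R2 = card {t \<in> {..<(m + 2) div q}. P (q * t + (q - 2))}"
  have "p > 0"
    using assms(1) by (rule prime_gt_0_nat)
  have periodic: "P (x mod p) = P x" for x
    unfolding P_def by (simp only: dvd_shifted_product_mod_iff)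
  have "coprime q p"
    using assms(1-3) by (simp add: primes_coprime)
  have "c * (m - M) \<le> p * G + c * d"
    using card_affine_window_bounds[where u = 1 and v = 0 and a = "Suc M" and n = "m - M"]
      \<open>p > 0\<close> periodic \<open>M \<le> m\<close>
    by (simp add: G_def c_def d_def atLeastLessThanSuc_atLeastAtMost)
  moreover have "p * R1 \<le> c * (m div q) + c * d"
    using card_affine_window_bounds[where u = q and v = q and a = 0 and n = "m div q"]
      \<open>p > 0\<close> periodic \<open>coprime q p\<close>
    by (simp add: R1_def c_def d_def atLeast0LessThan distrib_left)
  moreover have "p * R2 \<le> c * ((m + 2) div q) + c * d"
    using card_affine_window_bounds[where u = q and v = "q - 2" and a = 0 and n = "(m + 2) div q"]
      \<open>p > 0\<close> periodic \<open>coprime q p\<close>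
    by (simp add: R2_def c_def d_def atLeast0LessThan distrib_left)
  moreover have "c * (m div q) + c * ((m + 2) div q) + 3 * (c * d) \<le> c * (m - M)"
    using mult_le_mono2[OF room, of c] by (simp add: d_def P_def distrib_left)
  ultimately have "p * (R1 + R2) \<le> p * G"
    unfolding distrib_left by linarith
  then have "R1 + R2 \<le> G"
    using \<open>p > 0\<close> by simp
  moreover have "card {k \<in> {1..m}. P k \<and> q dvd k * (k + 2)} \<le> R1 + R2"
    unfolding R1_def R2_def using assms(2) by (rule card_filter_dvd_shifted_product_le)
  moreover have "Ncount m {p} = Ncount M {p} + G"
    using Ncount_add_tail[OF \<open>M \<le> m\<close>, of "{p}"] by (simp add: G_def P_def)
  moreover have "Ncount m {p, q} + card {k \<in> {1..m}. P k \<and> q dvd k * (k + 2)} = Ncount m {p}"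
    using Ncount_insert[of m q "{p}"] by (simp add: P_def insert_commute)
  ultimately show ?thesis
    by linarith
qed

lemma two_div_add_shifted_div_le:
  fixes m q :: nat
  assumes "q \<ge> 3"
  shows "2 * (m div q) + (m + 2) div q \<le> 3 * m div q"
proof -
  define T r where "T = m div q" and "r = m mod q"
  have "q > 0" "r < q"
    using assms by (simp_all add: r_def)
  have m: "m = r + q * T"
    by (simp add: T_def r_def)
  have "3 * m div q = 3 * r div q + 3 * T"
    using div_mult_self2[of q "3 * r" "3 * T"] \<open>q > 0\<close> unfolding m by (simp add: algebra_simps)
  moreover have "(m + 2) div q = (r + 2) div q + T"
    using div_mult_self2[of q "r + 2" T] \<open>q > 0\<close> unfolding m by (simp add: algebra_simps)
  moreover have "(r + 2) div q \<le> 3 * r div q"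
  proof (cases "r + 2 < q")
    case False
    have "(r + 2) div q < 2"
      using \<open>r < q\<close> assms by (simp add: div_less_iff_less_mult)
    moreover have "1 \<le> 3 * r div q"
      using False assms \<open>q > 0\<close> by (simp add: less_eq_div_iff_mult_less_eq)
    ultimately show ?thesis by linarith
  qed simp
  ultimately show ?thesis
    unfolding T_def by linarith
qed

lemma nat_ceiling_le_diff_div:
  fixes m a q :: nat
  shows "nat \<lceil>real m * (1 - real a / real q)\<rceil> \<le> m - a * m div q"
proof -
  have "real (a * m div q) \<le> real (a * m) / real q"
    by (rule of_nat_div_le_of_nat)
  then have "real m * (1 - real a / real q) \<le> real m - real (a * m div q)"
    by (simp add: algebra_simps)
  then have "\<lceil>real m * (1 - real a / real q)\<rceil> \<le> int m - int (a * m div q)"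
    by (simp add: ceiling_le_iff)
  then show ?thesis
    unfolding nat_le_iff by linarith
qed

lemma Ncount_three_five_small:
  assumes "25 \<le> m" "m < 30"
  shows "Ncount (m - 3 * m div 5) {3} \<le> Ncount m {3, 5}"
proof -
  have "\<forall>m \<in> {25, 26, 27, 28, 29}. Ncount (m - 3 * m div 5) {3} \<le> Ncount m {3, 5}"
    by code_simp
  moreover have "m \<in> {25, 26, 27, 28, 29}"
    using assms by auto
  ultimately show ?thesis
    by blast
qed

lemma three_card_dvd_shifted_residues_le_div:
  fixes p q m :: nat
  assumes "prime p" "prime q" "p < q" "q\<^sup>2 \<le> m"
    and not_small: "\<not> (p = 3 \<and> q = 5 \<and> m < 30)"
  shows "3 * card {r \<in> {..<p}. p dvd r * (r + 2)} \<le> m div q"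
proof -
  have "q \<le> m div q"
    using assms(4) prime_gt_0_nat[OF assms(2)]
    by (simp add: less_eq_div_iff_mult_less_eq power2_eq_square)
  have "p \<ge> 2" "q \<ge> 3"
    using prime_ge_2_nat[OF assms(1)] assms(3) by simp_all
  have "p = 2 \<or> q \<ge> 7 \<or> (p = 3 \<and> q = 5)"
  proof (rule ccontr)
    assume "\<not> ?thesis"
    then have "p > 2" "q < 7" "\<not> (p = 3 \<and> q = 5)"
      using \<open>p \<ge> 2\<close> by auto
    moreover have "odd p" "odd q"
      using \<open>p > 2\<close> \<open>p < q\<close> assms(1,2) by (simp_all add: prime_odd_nat)
    ultimately show False
      using \<open>p < q\<close> by presburger
  qed
  then consider "p = 2" | "q \<ge> 7" | "p = 3 \<and> q = 5"
    by blast
  then show ?thesis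
  proof cases
    case 1
    have "card {r \<in> {..<2::nat}. 2 dvd r * (r + 2)} = 1"
      by code_simp
    then show ?thesis
      using 1 \<open>q \<le> m div q\<close> \<open>q \<ge> 3\<close> by simp
  next
    case 2
    then show ?thesis
      using card_dvd_shifted_residues_le_two[OF assms(1)] \<open>q \<le> m div q\<close> by linarith
  next
    case 3
    with not_small have "6 \<le> m div q"
      by (simp add: less_eq_div_iff_mult_less_eq)
    then show ?thesis
      using card_dvd_shifted_residues_le_two[OF assms(1)] by linarith
  qed
qed

lemma Ncount_ceiling_le_Ncount_pair:
  fixes p q m :: nat
  assumes "prime p" "prime q" "p < q" "q\<^sup>2 \<le> m"
  shows "Ncount (nat \<lceil>real m * (1 - 3 / real q)\<rceil>) {p} \<le> Ncount m {p, q}"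
proof -
  define M where "M = nat \<lceil>real m * (1 - 3 / real q)\<rceil>"
  have "q \<ge> 3"
    using prime_ge_2_nat[OF assms(1)] assms(3) by simp
  have M_le: "M \<le> m - 3 * m div q"
    using nat_ceiling_le_diff_div[of m 3 q] unfolding M_def by simp
  show ?thesis
  proof (cases "p = 3 \<and> q = 5 \<and> m < 30")
    case True
    then have "Ncount M {p} \<le> Ncount (m - 3 * m div 5) {3}"
      using M_le by (simp add: Ncount_mono)
    also have "\<dots> \<le> Ncount m {p, q}"
      using True assms(4) Ncount_three_five_small[of m] by simp
    finally show ?thesis
      unfolding M_def .
  next
    case False
    then have "3 * card {r \<in> {..<p}. p dvd r * (r + 2)} \<le> m div q"
      using three_card_dvd_shifted_residues_le_div[OF assms] by blast
    then have "m div q + (m + 2) div q + 3 * card {r \<in> {..<p}. p dvd r * (r + 2)} \<le> m - M"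
      using two_div_add_shifted_div_le[OF \<open>q \<ge> 3\<close>, of m] div_le_mono2[of 3 q "3 * m"]
        \<open>q \<ge> 3\<close> M_le by fastforce
    then show ?thesis
      using Ncount_singleton_le_Ncount_pair[OF assms(1,2)] assms(3) M_le unfolding M_def by simp
  qed
qed

theorem lemma4p3:
  fixes pi pj m :: nat
  assumes "prime pi" "prime pj" "pi < pj" "m \<ge> pj ^ 2"
  defines "M' \<equiv> nat (ceiling (real m * (1 - 3 / real pj)))"
  shows "(pi \<ge> 3 \<longrightarrow> Ncount m {pi, pj} \<ge> Ncount M' {pi}
            \<and> int (Ncount m {pi, pj}) \<ge> int M' - int M' div int pi - (int M' + 2) div int pi)
       \<and> (pi = 2 \<longrightarrow> Ncount m {2, pj} \<ge> Ncount M' {2}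
            \<and> int (Ncount m {2, pj}) \<ge> int M' - int M' div 2)"
proof -
  have "Ncount M' {pi} \<le> Ncount m {pi, pj}"
    unfolding M'_def using assms(1-4) by (rule Ncount_ceiling_le_Ncount_pair)
  then show ?thesis
    using Ncount_singleton_odd_prime[OF assms(1), of M'] Ncount_singleton_two[of M'] by auto
qed

end
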